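(* Let $\mathbf{F}_q$ be a finite field of characteristic $p$ with $q>2$. For every integer $1\le k\le q-2$ and every $b\in\mathbf{F}_q$, $$N(k,b,\mathbf{F}_q\setminus\{0,1\})=\frac1q\binom{q-2}{k}+\frac1q(-1)^kR^2_k-(-1)^kS(k,k-b),$$ where $k-b$ is computed in $\mathbf{F}_q$ (the integer $k$ being viewed in the prime field $\mathbf{F}_p$).
   Context: $N(k,b,D)$ denotes the number of $k$-element subsets $\{x_1,\dots,x_k\}\subseteq D$ with $x_1+\dots+x_k=b$. Binomial coefficients $\binom{x}{m}=x(x-1)\cdots(x-m+1)/m!$ for real $x$, integer $m\ge0$ (so e.g. $\binom{0}{m}=[m=0]$ and $\binom{-1}{m}=(-1)^m$). For integers $j\ge0$ define $R^1_j=-(-1)^{\lfloor j/p\rfloor}\binom{q/p-1}{\lfloor j/p\rfloor}$ and $R^2_k=\sum_{j=0}^kR^1_j$. For an integer $k\ge0$ and $c\in\mathbf{F}_q$ define $S(k,c)=\sum_{0\le i\le k,\ i\equiv c \pmod p}R^1_i$ if $c$ lies in the prime subfield $\mathbf{F}_p$ (where $i\equiv c$ means the image of $i$ in $\mathbf{F}_p$ equals $c$), and $S(k,c)=0$ if $c\notin\mathbf{F}_p$. *)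

theory Defs
  imports Main "HOL-Library.Cardinality" Complex_Main
begin

definition Nsub :: "nat \<Rightarrow> 'a::comm_monoid_add \<Rightarrow> 'a set \<Rightarrow> nat" where
  "Nsub k b D = card {X. X \<subseteq> D \<and> card X = k \<and> finite X \<and> (\<Sum>x\<in>X. x) = b}"

definition R1 :: "nat \<Rightarrow> nat \<Rightarrow> nat \<Rightarrow> real" where
  "R1 p q j = - ((-1) ^ (j div p) * ((real q / real p - 1) gchoose (j div p)))"

definition R2 :: "nat \<Rightarrow> nat \<Rightarrow> nat \<Rightarrow> real" where
  "R2 p q k = (\<Sum>j=0..k. R1 p q j)"

definition Ssum :: "nat \<Rightarrow> nat \<Rightarrow> nat \<Rightarrow> 'a::field \<Rightarrow> real" where
  "Ssum p q k c = (if (\<exists>n::nat. c = of_nat n)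
      then (\<Sum>i\<in>{i. i \<le> k \<and> (of_nat i :: 'a) = c}. R1 p q i) else 0)"

end

theory Submission
  imports Defs
begin

(* For a finite field F_q of characteristic p, write M_n(b) for the number of n-subsets of F_q
   with sum b.  Multiplication by a unit permutes the n-subsets, so M_n(b) = M_n(1) + [b = 0] a_n
   with a "zero bias" a_n = M_n(0) - M_n(1).  Counting pairs (y, X) with y \<in> X and deleting y
   by inclusion-exclusion gives a Newton-type recursion for a_n, which is also satisfied by the
   explicit function  [p | n] (-1)^(n + n/p) binom(q/p, n/p);  hence the two agree.  Summing M_n
   over all values b gives binom(q, n), and so M_n(b) is known in closed form.
   Adjoining the two points 0 and 1 to F_q - {0,1} by Pascal's rule expresses M_{k+2}(b) through
   the counts over F_q - {0,1} for sizes k+2, k+1, k.  The formula of the theorem satisfies the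
   same recursion, because a_{k+1} = (-1)^k (R^1_{k+1} - R^1_k), and is correct for k = 0, 1;
   induction on k proves it for every k. *)

lemma Nsub_zero: "Nsub 0 b (A::'a::comm_monoid_add set) = (if b = 0 then 1 else 0)"
proof -
  have "{X. X \<subseteq> A \<and> card X = 0 \<and> finite X \<and> (\<Sum>x\<in>X. x) = b} = (if b = 0 then {{}} else {})"
    by auto
  then show ?thesis unfolding Nsub_def by simp
qed

lemma Nsub_one: "Nsub (Suc 0) b (A::'a::comm_monoid_add set) = (if b \<in> A then 1 else 0)"
proof -
  have "{X. X \<subseteq> A \<and> card X = Suc 0 \<and> finite X \<and> (\<Sum>x\<in>X. x) = b} = (if b \<in> A then {{b}} else {})"
    by (auto simp: card_Suc_eq)
  then show ?thesis unfolding Nsub_def by simp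
qed

(* Removing y is a bijection from the (k+1)-subsets of insert y A that contain y and sum to b
   onto the k-subsets of A summing to b - y. *)
lemma Nsub_containing:
  fixes A :: "'a::ab_group_add set"
  assumes "y \<notin> A"
  shows "card {X. X \<subseteq> insert y A \<and> card X = Suc k \<and> finite X \<and> (\<Sum>x\<in>X. x) = b \<and> y \<in> X}
    = Nsub k (b - y) A"
proof -
  let ?T = "{X. X \<subseteq> A \<and> card X = k \<and> finite X \<and> (\<Sum>x\<in>X. x) = b - y}"
  have "{X. X \<subseteq> insert y A \<and> card X = Suc k \<and> finite X \<and> (\<Sum>x\<in>X. x) = b \<and> y \<in> X}
      = insert y ` ?T"
  proof (intro set_eqI iffI)
    fix X assume X: "X \<in> {X. X \<subseteq> insert y A \<and> card X = Suc k \<and> finite X \<and> (\<Sum>x\<in>X. x) = b \<and> y \<in> X}"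
    then have "X - {y} \<in> ?T" using assms by (auto simp: sum_diff1 card_Diff_singleton)
    moreover have "X = insert y (X - {y})" using X by auto
    ultimately show "X \<in> insert y ` ?T" by blast
  next
    fix X assume "X \<in> insert y ` ?T"
    then obtain Y where "Y \<in> ?T" "X = insert y Y" by blast
    moreover have "y \<notin> Y" using \<open>Y \<in> ?T\<close> assms by auto
    ultimately show "X \<in> {X. X \<subseteq> insert y A \<and> card X = Suc k \<and> finite X \<and> (\<Sum>x\<in>X. x) = b \<and> y \<in> X}"
      by (auto simp: algebra_simps)
  qed
  moreover have "inj_on (insert y) ?T"
  proof (rule inj_onI)
    fix Y Z assume "Y \<in> ?T" "Z \<in> ?T" "insert y Y = insert y Z"
    then have "insert y Y - {y} = insert y Z - {y}" by simp
    then show "Y = Z" using \<open>Y \<in> ?T\<close> \<open>Z \<in> ?T\<close> assms by auto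
  qed
  ultimately show ?thesis unfolding Nsub_def by (simp add: card_image)
qed

(* Pascal's rule: split the (k+1)-subsets of insert y A according to whether they contain y. *)
lemma Nsub_insert:
  fixes A :: "'a::ab_group_add set"
  assumes "finite A" "y \<notin> A"
  shows "Nsub (Suc k) b (insert y A) = Nsub (Suc k) b A + Nsub k (b - y) A"
proof -
  let ?P = "\<lambda>B X. X \<subseteq> B \<and> card X = Suc k \<and> finite X \<and> (\<Sum>x\<in>X. x) = b"
  have split: "{X. ?P (insert y A) X} = {X. ?P A X} \<union> {X. ?P (insert y A) X \<and> y \<in> X}"
    by auto
  have fin: "finite {X. ?P (insert y A) X}"
    by (rule finite_subset[of _ "Pow (insert y A)"]) (auto simp: assms(1))
  have "card {X. ?P (insert y A) X} = card {X. ?P A X} + card {X. ?P (insert y A) X \<and> y \<in> X}"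
    unfolding split using fin assms(2) by (intro card_Un_disjoint) (auto simp: split)
  then show ?thesis using Nsub_containing[OF assms(2)] unfolding Nsub_def by simp
qed

lemma Nsub_insert_two:
  fixes A :: "'a::ab_group_add set"
  assumes "finite A" "y \<notin> A" "z \<notin> A" "y \<noteq> z"
  shows "Nsub (Suc (Suc k)) b (insert y (insert z A))
    = Nsub (Suc (Suc k)) b A + Nsub (Suc k) (b - z) A + Nsub (Suc k) (b - y) A + Nsub k (b - y - z) A"
  using assms by (simp add: Nsub_insert)

(* Every n-subset has exactly one sum, so summing the counts over all values gives binom(|A|, n). *)
lemma sum_Nsub_over_values:
  fixes A :: "'a::{comm_monoid_add,finite} set"
  shows "(\<Sum>b\<in>UNIV. Nsub n b A) = card A choose n"
proof -
  let ?F = "\<lambda>b. {X. X \<subseteq> A \<and> card X = n \<and> finite X \<and> (\<Sum>x\<in>X. x) = b}"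
  have "{X. X \<subseteq> A \<and> card X = n} = (\<Union>b. ?F b)" by auto
  then have "card {X. X \<subseteq> A \<and> card X = n} = (\<Sum>b\<in>UNIV. card (?F b))"
    by (simp only:) (rule card_UN_disjoint, auto)
  then show ?thesis using n_subsets[of A n] unfolding Nsub_def by simp
qed

(* Double counting of the pairs (y, X) with y \<in> X, where X is an (n+1)-subset of A with sum b. *)
lemma Nsub_double_count:
  fixes A :: "'a::ab_group_add set"
  assumes "finite A"
  shows "Suc n * Nsub (Suc n) b A = (\<Sum>y\<in>A. Nsub n (b - y) (A - {y}))"
proof -
  let ?T = "{X. X \<subseteq> A \<and> card X = Suc n \<and> finite X \<and> (\<Sum>x\<in>X. x) = b}"
  have fin: "finite ?T"
    by (rule finite_subset[of _ "Pow A"]) (auto simp: assms)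
  have "Nsub n (b - y) (A - {y}) = card {X\<in>?T. y \<in> X}" if "y \<in> A" for y
  proof -
    have A: "insert y (A - {y}) = A" using that by auto
    have "Nsub n (b - y) (A - {y})
        = card {X. X \<subseteq> A \<and> card X = Suc n \<and> finite X \<and> (\<Sum>x\<in>X. x) = b \<and> y \<in> X}"
      using Nsub_containing[of y "A - {y}" n b] unfolding A by simp
    then show ?thesis by (simp add: conj_commute conj_left_commute)
  qed
  then have "(\<Sum>y\<in>A. Nsub n (b - y) (A - {y})) = (\<Sum>y\<in>A. card {X\<in>?T. y \<in> X})"
    by simp
  also have "\<dots> = Suc n * card ?T"
    using assms fin by (intro sum_multicount) (auto simp: Int_absorb1 Collect_conj_eq)
  finally show ?thesis unfolding Nsub_def by simp
qed

(* Inclusion-exclusion for deleting a point y \<in> A: iterate Pascal's rule, each step moving the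
   point y from the subset into the prescribed sum. *)
lemma Nsub_delete:
  fixes A :: "'a::comm_ring_1 set"
  assumes "finite A" "y \<in> A"
  shows "real (Nsub n c (A - {y})) = (\<Sum>j\<le>n. (-1)^j * real (Nsub (n - j) (c - of_nat j * y) A))"
proof (induction n arbitrary: c)
  case 0
  then show ?case by (simp add: Nsub_zero)
next
  case (Suc n)
  have A: "insert y (A - {y}) = A" using assms(2) by auto
  have "real (Nsub (Suc n) c (A - {y})) = real (Nsub (Suc n) c A) - real (Nsub n (c - y) (A - {y}))"
    using Nsub_insert[of "A - {y}" y n c] assms(1) unfolding A by simp
  also have "\<dots> = real (Nsub (Suc n) c A)
      + (\<Sum>j\<le>n. (-1)^Suc j * real (Nsub (Suc n - Suc j) (c - of_nat (Suc j) * y) A))"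
    by (simp add: Suc sum_negf algebra_simps)
  also have "\<dots> = (\<Sum>j\<le>Suc n. (-1)^j * real (Nsub (Suc n - j) (c - of_nat j * y) A))"
    by (simp only: sum.atMost_Suc_shift) simp
  finally show ?case .
qed

(* Multiplication by c \<noteq> 0 permutes the n-subsets of the field and multiplies their sums by c. *)
lemma Nsub_UNIV_scale:
  fixes c b :: "'a::{field,finite}"
  assumes "c \<noteq> 0"
  shows "Nsub n (c * b) UNIV = Nsub n b UNIV"
proof -
  let ?T = "\<lambda>b. {X. X \<subseteq> (UNIV::'a set) \<and> card X = n \<and> finite X \<and> (\<Sum>x\<in>X. x) = b}"
  have inj: "inj ((*) c)" using assms by (auto intro: injI)
  then have card: "card ((*) c ` X) = card X" and sum: "(\<Sum>x\<in>(*) c ` X. x) = c * (\<Sum>x\<in>X. x)" for X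
    by (auto simp: card_image sum.reindex sum_distrib_left inj_on_subset[OF inj])
  have "?T (c * b) = (`) ((*) c) ` ?T b"
  proof (intro set_eqI iffI)
    fix X assume X: "X \<in> ?T (c * b)"
    have "X = (*) c ` ((*) (inverse c) ` X)" using assms by (auto simp: image_image image_iff mult.assoc[symmetric])
    moreover have "(*) (inverse c) ` X \<in> ?T b"
      using X assms card[of "(*) (inverse c) ` X"] sum[of "(*) (inverse c) ` X"] calculation
      by (auto simp: field_simps)
    ultimately show "X \<in> (`) ((*) c) ` ?T b" by blast
  qed (auto simp: card sum)
  moreover have "inj_on ((`) ((*) c)) (?T b)"
    using inj by (intro inj_onI) (simp add: inj_image_eq_iff)
  ultimately show ?thesis unfolding Nsub_def by (simp add: card_image)
qed

(* By the scaling invariance, the count over the whole field takes only two values: one at b = 0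
   and one at b \<noteq> 0.  The zero bias is their difference. *)
definition zero_bias :: "'a::{field,finite} itself \<Rightarrow> nat \<Rightarrow> real" where
  "zero_bias _ n = real (Nsub n (0::'a) UNIV) - real (Nsub n (1::'a) UNIV)"

lemma Nsub_UNIV_via_bias:
  fixes b :: "'a::{field,finite}"
  shows "real (Nsub n b UNIV) = real (Nsub n (1::'a) UNIV) + (if b = 0 then zero_bias TYPE('a) n else 0)"
  using Nsub_UNIV_scale[of b n 1] by (simp add: zero_bias_def)

(* Summing along the line y \<mapsto> b - d y: the difference between b = 0 and b = 1 only sees how
   often the line passes through 0, which is CARD('a) times for d = 0 and once each for d \<noteq> 0. *)
lemma sum_Nsub_UNIV_line_diff:
  fixes d :: "'a::{field,finite}"
  shows "(\<Sum>y\<in>UNIV. real (Nsub m (0 - d * y) UNIV)) - (\<Sum>y\<in>UNIV. real (Nsub m (1 - d * y) UNIV))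
    = (if d = 0 then real CARD('a) * zero_bias TYPE('a) m else 0)"
proof -
  have "real (Nsub m (0 - d * y) UNIV) - real (Nsub m (1 - d * y) UNIV)
      = zero_bias TYPE('a) m * ((if d * y = 0 then 1 else 0) - (if d * y = 1 then 1 else 0))" for y
    by (subst (1 2) Nsub_UNIV_via_bias) (auto simp: eq_commute[of 1])
  then have "(\<Sum>y\<in>UNIV. real (Nsub m (0 - d * y) UNIV)) - (\<Sum>y\<in>UNIV. real (Nsub m (1 - d * y) UNIV))
      = zero_bias TYPE('a) m * ((\<Sum>y\<in>UNIV. if d * y = 0 then 1 else 0) - (\<Sum>y\<in>UNIV. if d * y = 1 then 1 else 0))"
    by (simp add: sum_subtractf[symmetric] sum_distrib_left)
  moreover have "d \<noteq> 0 \<Longrightarrow> (d * y = 1) = (y = inverse d)" for y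
    by (auto simp: field_simps)
  ultimately show ?thesis by (cases "d = 0") simp_all
qed

(* Double counting followed by inclusion-exclusion, for the whole field. *)
lemma Nsub_UNIV_Suc_expansion:
  fixes b :: "'a::{field,finite}"
  shows "real (Suc n) * real (Nsub (Suc n) b UNIV)
    = (\<Sum>j\<le>n. (-1)^j * (\<Sum>y\<in>UNIV. real (Nsub (n - j) (b - of_nat (Suc j) * y) UNIV)))"
proof -
  have "real (Suc n) * real (Nsub (Suc n) b UNIV) = (\<Sum>y\<in>UNIV. real (Nsub n (b - y) (UNIV - {y})))"
    using Nsub_double_count[of "UNIV::'a set" n b] by (metis of_nat_mult of_nat_sum finite)
  also have "\<dots> = (\<Sum>y\<in>UNIV. \<Sum>j\<le>n. (-1)^j * real (Nsub (n - j) (b - of_nat (Suc j) * y) UNIV))"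
    by (simp add: Nsub_delete algebra_simps)
  also have "\<dots> = (\<Sum>j\<le>n. (-1)^j * (\<Sum>y\<in>UNIV. real (Nsub (n - j) (b - of_nat (Suc j) * y) UNIV)))"
    by (subst sum.swap) (simp add: sum_distrib_left)
  finally show ?thesis .
qed

(* The Newton-type recursion satisfied by the zero bias: only the indices j with (j+1)y = 0
   for all y, i.e. CHAR('a) dividing j + 1, contribute. *)
lemma zero_bias_rec:
  "real (Suc n) * zero_bias TYPE('a::{field,finite}) (Suc n)
    = (\<Sum>j\<le>n. (-1)^j * zero_bias TYPE('a) (n - j) * (if CHAR('a) dvd Suc j then real CARD('a) else 0))"
proof -
  have "real (Suc n) * zero_bias TYPE('a) (Suc n)
      = (\<Sum>j\<le>n. (-1)^j * ((\<Sum>y\<in>UNIV. real (Nsub (n - j) ((0::'a) - of_nat (Suc j) * y) UNIV))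
          - (\<Sum>y\<in>UNIV. real (Nsub (n - j) ((1::'a) - of_nat (Suc j) * y) UNIV))))"
    unfolding zero_bias_def right_diff_distrib Nsub_UNIV_Suc_expansion by (simp add: sum_subtractf)
  also have "\<dots> = (\<Sum>j\<le>n. (-1)^j * zero_bias TYPE('a) (n - j) * (if CHAR('a) dvd Suc j then real CARD('a) else 0))"
    unfolding sum_Nsub_UNIV_line_diff of_nat_eq_0_iff_char_dvd by (auto intro: sum.cong)
  finally show ?thesis .
qed

(* The explicit solution of this recursion, with Q = q / p. *)
definition bias_cf :: "nat \<Rightarrow> real \<Rightarrow> nat \<Rightarrow> real" where
  "bias_cf p Q n = (if p dvd n then (-1)^(n + n div p) * (Q gchoose (n div p)) else 0)"

lemma sum_Suc_multiples:
  fixes f :: "nat \<Rightarrow> 'b::comm_monoid_add"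
  assumes "p > 0" "Suc n = p * M"
  shows "(\<Sum>j\<le>n. if p dvd Suc j then f j else 0) = (\<Sum>i<M. f (n - p * i))"
proof -
  have le: "p * i \<le> n" if "i < M" for i
  proof -
    have "p * Suc i \<le> p * M" using that by (intro mult_le_mono2) simp
    then show ?thesis using assms(1) \<open>Suc n = p * M\<close> by simp
  qed
  have img: "{j. j \<le> n \<and> p dvd Suc j} = (\<lambda>i. n - p * i) ` {..<M}"
  proof (intro set_eqI iffI)
    fix j assume "j \<in> {j. j \<le> n \<and> p dvd Suc j}"
    then obtain t where t: "Suc j = p * t" "j \<le> n" by auto
    then have "p * t \<le> p * M" using assms(2) by (metis Suc_le_mono)
    then have "t \<le> M" using assms(1) by simp
    moreover have "t > 0" using t(1) by (intro gr0I) simp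
    ultimately have "M - t < M \<and> j = n - p * (M - t)" using t assms by (simp add: diff_mult_distrib2)
    then show "j \<in> (\<lambda>i. n - p * i) ` {..<M}" by blast
  next
    fix j assume "j \<in> (\<lambda>i. n - p * i) ` {..<M}"
    then obtain i where "i < M" "j = n - p * i" by auto
    moreover have "Suc (n - p * i) = p * (M - i)"
      using le[OF \<open>i < M\<close>] assms(2) by (simp add: diff_mult_distrib2)
    ultimately show "j \<in> {j. j \<le> n \<and> p dvd Suc j}" by auto
  qed
  have inj: "inj_on (\<lambda>i. n - p * i) {..<M}"
    using le assms(1) by (intro inj_onI) (metis lessThan_iff diff_diff_cancel mult_left_cancel not_gr0)
  have "(\<Sum>j\<le>n. if p dvd Suc j then f j else 0) = (\<Sum>j\<in>{j. j \<le> n \<and> p dvd Suc j}. f j)"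
    by (simp add: sum.inter_filter[symmetric] atMost_def Collect_conj_eq Int_commute)
  also have "\<dots> = (\<Sum>i<M. f (n - p * i))"
    unfolding img by (simp add: sum.reindex[OF inj])
  finally show ?thesis .
qed

(* The explicit function satisfies the same recursion (with p Q in place of q).  When p divides
   n + 1 = p (m+1), both sides reduce to an alternating partial sum of binomial coefficients. *)
lemma bias_cf_rec:
  assumes p: "p > 0"
  shows "real (Suc n) * bias_cf p Q (Suc n)
    = (\<Sum>j\<le>n. (-1)^j * bias_cf p Q (n - j) * (if p dvd Suc j then real p * Q else 0))"
proof (cases "p dvd Suc n")
  case False
  have "(-1)^j * bias_cf p Q (n - j) * (if p dvd Suc j then real p * Q else 0) = 0" if "j \<le> n" for j
  proof -
    have "Suc n = Suc j + (n - j)" using that by simp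
    then have "\<not> (p dvd Suc j \<and> p dvd (n - j))" using False by (metis dvd_add)
    then show ?thesis by (auto simp: bias_cf_def)
  qed
  then have "(\<Sum>j\<le>n. (-1)^j * bias_cf p Q (n - j) * (if p dvd Suc j then real p * Q else 0)) = 0"
    by (intro sum.neutral) simp
  then show ?thesis using False by (simp add: bias_cf_def)
next
  case True
  then obtain m where M: "Suc n = p * Suc m"
    by (metis dvd_def mult_0_right nat.distinct(1) not0_implies_Suc)
  have sign: "(-1::real)^(n - p * i) * (-1)^(p * i + i) = (-1)^n * (-1)^i" if "p * i \<le> n" for i
    using that by (simp add: power_add[symmetric] mult.assoc)
  have "(\<Sum>j\<le>n. (-1)^j * bias_cf p Q (n - j) * (if p dvd Suc j then real p * Q else 0))
      = (\<Sum>j\<le>n. if p dvd Suc j then (-1)^j * bias_cf p Q (n - j) * (real p * Q) else 0)"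
    by (intro sum.cong) auto
  also have "\<dots> = (\<Sum>i<Suc m. (-1)^(n - p * i) * bias_cf p Q (n - (n - p * i)) * (real p * Q))"
    by (rule sum_Suc_multiples[OF p M])
  also have "\<dots> = (\<Sum>i<Suc m. real p * Q * (-1)^n * ((Q gchoose i) * (-1)^i))"
  proof (rule sum.cong[OF refl])
    fix i assume "i \<in> {..<Suc m}"
    then have "p * i \<le> p * m" by (intro mult_le_mono2) simp
    also have "\<dots> < Suc n" using M p by simp
    finally have le: "p * i \<le> n" by simp
    then have "bias_cf p Q (n - (n - p * i)) = (-1)^(p * i + i) * (Q gchoose i)"
      using p by (simp add: bias_cf_def)
    then have "(-1)^(n - p * i) * bias_cf p Q (n - (n - p * i)) * (real p * Q)
        = ((-1)^(n - p * i) * (-1)^(p * i + i)) * (Q gchoose i) * (real p * Q)"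
      by (simp add: mult_ac)
    then show "(-1)^(n - p * i) * bias_cf p Q (n - (n - p * i)) * (real p * Q)
        = real p * Q * (-1)^n * ((Q gchoose i) * (-1)^i)"
      unfolding sign[OF le] by (simp add: mult_ac)
  qed
  also have "\<dots> = real p * Q * (-1)^(n + m) * ((Q - 1) gchoose m)"
    by (simp only: lessThan_Suc_atMost sum_distrib_left[symmetric] gbinomial_sum_lower_neg)
       (simp add: power_add mult_ac)
  also have "\<dots> = real p * (-1)^(n + m) * (real (Suc m) * (Q gchoose Suc m))"
    by (simp only: gbinomial_absorption) (simp add: mult_ac)
  also have "\<dots> = real (Suc n) * bias_cf p Q (Suc n)"
  proof -
    have "Suc n div p = Suc m" using M p by simp
    then have "bias_cf p Q (Suc n) = (-1)^(n + m) * (Q gchoose Suc m)"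
      using True by (simp add: bias_cf_def)
    moreover have "real (Suc n) = real p * real (Suc m)" by (simp only: M of_nat_mult)
    ultimately show ?thesis by (simp add: mult_ac)
  qed
  finally show ?thesis ..
qed

(* A finite field has positive characteristic, which is never 1, and it has the two distinct
   elements 0 and 1. *)
lemma CHAR_ge_2: "CHAR('a::{field,finite}) \<ge> 2"
proof -
  have "CHAR('a) \<noteq> 1" by simp
  moreover have "CHAR('a) > 0" by (rule finite_imp_CHAR_pos) simp
  ultimately show ?thesis by linarith
qed

lemma CARD_ge_2: "CARD('a::{field,finite}) \<ge> 2"
proof -
  have "card {0::'a, 1} \<le> CARD('a)" by (rule card_mono) simp_all
  then show ?thesis by simp
qed

(* Both sequences solve the same recursion with the same initial value. *)
lemma zero_bias_eq_cf:
  "zero_bias TYPE('a::{field,finite}) n = bias_cf CHAR('a) (real CARD('a) / real CHAR('a)) n"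
proof (induction n rule: less_induct)
  case (less n)
  let ?p = "CHAR('a)" and ?Q = "real CARD('a) / real CHAR('a)"
  have p: "?p > 0" using CHAR_ge_2[where 'a='a] by simp
  then have pQ: "real ?p * ?Q = real CARD('a)" by simp
  show ?case
  proof (cases n)
    case 0
    then show ?thesis by (simp add: zero_bias_def bias_cf_def Nsub_zero)
  next
    case (Suc m)
    have "real (Suc m) * zero_bias TYPE('a) (Suc m)
       = (\<Sum>j\<le>m. (-1)^j * zero_bias TYPE('a) (m - j) * (if ?p dvd Suc j then real CARD('a) else 0))"
      by (rule zero_bias_rec)
    also have "\<dots> = (\<Sum>j\<le>m. (-1)^j * bias_cf ?p ?Q (m - j) * (if ?p dvd Suc j then real ?p * ?Q else 0))"
      using less Suc pQ by (intro sum.cong) auto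
    also have "\<dots> = real (Suc m) * bias_cf ?p ?Q (Suc m)"
      by (rule bias_cf_rec[OF p, symmetric])
    finally show ?thesis using Suc by simp
  qed
qed

lemma Nsub_UNIV_closed:
  fixes b :: "'a::{field,finite}"
  shows "real (Nsub n b UNIV)
    = (real (CARD('a) choose n) - bias_cf CHAR('a) (real CARD('a) / real CHAR('a)) n) / real CARD('a)
      + (if b = 0 then bias_cf CHAR('a) (real CARD('a) / real CHAR('a)) n else 0)"
proof -
  have "real (CARD('a) choose n) = (\<Sum>c\<in>UNIV. real (Nsub n (c::'a) UNIV))"
    using sum_Nsub_over_values[of n "UNIV::'a set"] by (metis of_nat_sum)
  also have "\<dots> = real CARD('a) * real (Nsub n (1::'a) UNIV) + zero_bias TYPE('a) n"
    by (subst Nsub_UNIV_via_bias) (simp add: sum.distrib)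
  finally have "real (Nsub n (1::'a) UNIV) = (real (CARD('a) choose n) - zero_bias TYPE('a) n) / real CARD('a)"
    by (simp add: field_simps)
  then show ?thesis by (subst Nsub_UNIV_via_bias) (simp add: zero_bias_eq_cf)
qed

lemma R1_0: "R1 p q 0 = -1"
  unfolding R1_def by simp

lemma R1_1: "p \<ge> 2 \<Longrightarrow> R1 p q 1 = -1"
  unfolding R1_def by simp

lemma R2_0: "R2 p q 0 = -1"
  unfolding R2_def by (simp add: R1_0)

lemma R2_Suc: "R2 p q (Suc k) = R2 p q k + R1 p q (Suc k)"
  unfolding R2_def by simp

lemma Ssum_0: "Ssum p q 0 (c::'a::field) = (if c = 0 then -1 else 0)"
proof (cases "c = 0")
  case True
  have zero: "{i. i \<le> 0 \<and> (of_nat i :: 'a) = c} = {0}" using True by auto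
  have "\<exists>n::nat. c = of_nat n" using True by (intro exI[of _ 0]) simp
  then show ?thesis using True unfolding Ssum_def zero by (simp add: R1_0)
next
  case False
  then have empty: "{i. i \<le> 0 \<and> (of_nat i :: 'a) = c} = {}" by auto
  show ?thesis using False unfolding Ssum_def empty by simp
qed

lemma Ssum_Suc:
  fixes c :: "'a::field"
  shows "Ssum p q (Suc k) c = Ssum p q k c + (if of_nat (Suc k) = c then R1 p q (Suc k) else 0)"
proof (cases "\<exists>n::nat. c = of_nat n")
  case False
  then have "of_nat (Suc k) \<noteq> c" by blast
  then show ?thesis using False unfolding Ssum_def by simp
next
  case True
  have "{i. i \<le> Suc k \<and> (of_nat i :: 'a) = c}
      = {i. i \<le> k \<and> (of_nat i :: 'a) = c} \<union> (if of_nat (Suc k) = c then {Suc k} else {})"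
    by (auto simp: le_Suc_eq)
  then show ?thesis unfolding Ssum_def using True by (simp add: sum.union_disjoint)
qed

(* The zero bias is, up to sign, the first difference of R^1 (Pascal's rule for gchoose). *)
lemma bias_cf_Suc_eq_R1:
  assumes "p > 0"
  shows "bias_cf p (real q / real p) (Suc n) = (-1)^n * (R1 p q (Suc n) - R1 p q n)"
proof (cases "p dvd Suc n")
  case True
  then have d: "Suc n div p = Suc (n div p)" using assms by (simp add: div_Suc dvd_eq_mod_eq_0)
  have "(real q / real p) gchoose Suc (n div p)
      = ((real q / real p - 1) gchoose (n div p)) + ((real q / real p - 1) gchoose Suc (n div p))"
    using gbinomial_Suc_Suc[of "real q / real p - 1" "n div p"] by simp
  then show ?thesis using True unfolding bias_cf_def R1_def d by (simp add: algebra_simps power_add)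
next
  case False
  then have "Suc n div p = n div p" using assms by (simp add: div_Suc dvd_eq_mod_eq_0)
  then show ?thesis using False unfolding bias_cf_def R1_def by simp
qed

lemma binomial_Suc_Suc_twice:
  "Suc (Suc n) choose Suc (Suc k) = (n choose k) + 2 * (n choose Suc k) + (n choose Suc (Suc k))"
  by simp

definition N01_formula :: "nat \<Rightarrow> nat \<Rightarrow> nat \<Rightarrow> 'a::field \<Rightarrow> real" where
  "N01_formula p q k b = (1 / real q) * real ((q - 2) choose k)
        + (1 / real q) * (-1) ^ k * R2 p q k
        - (-1) ^ k * Ssum p q k (of_nat k - b)"

(* The formula obeys the recursion of Nsub_insert_two for adjoining the points 1 and 0. *)
lemma N01_formula_rec:
  fixes b :: "'a::{field,finite}"
  assumes q: "q = CARD('a)" and p: "p = CHAR('a)"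
  shows "N01_formula p q (Suc (Suc k)) b + N01_formula p q (Suc k) b
      + N01_formula p q (Suc k) (b - 1) + N01_formula p q k (b - 1)
    = real (Nsub (Suc (Suc k)) b UNIV)"
proof -
  let ?K = "Suc (Suc k)" and ?s = "(-1::real)^k" and ?d = "if b = 0 then 1 else (0::real)"
  let ?r1 = "R1 p q (Suc k)" and ?r2 = "R1 p q (Suc (Suc k))"
  have q2: "q \<ge> 2" using q CARD_ge_2[where 'a='a] by simp
  have binom: "real (q choose ?K) = real ((q-2) choose k) + 2 * real ((q-2) choose Suc k) + real ((q-2) choose ?K)"
  proof -
    obtain n where "q = Suc (Suc n)" using q2 by (metis add_2_eq_Suc le_Suc_ex)
    then show ?thesis by (simp only: binomial_Suc_Suc_twice) simp
  qed
  have M: "real (Nsub ?K b UNIV) = (real (q choose ?K) - ?s * (?r1 - ?r2)) / real q + ?d * (?s * (?r1 - ?r2))"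
  proof -
    have "bias_cf p (real q / real p) ?K = ?s * (?r1 - ?r2)"
      using bias_cf_Suc_eq_R1[of p q "Suc k"] CHAR_ge_2[where 'a='a] p by (simp add: algebra_simps)
    then show ?thesis using Nsub_UNIV_closed[of ?K b] unfolding q p by simp
  qed
  have S1: "Ssum p q ?K (of_nat ?K - b) = Ssum p q (Suc k) (of_nat ?K - b) + ?d * ?r2"
    by (subst Ssum_Suc) (simp add: eq_commute[of 0])
  have S2: "Ssum p q (Suc k) (of_nat (Suc k) - b) = Ssum p q k (of_nat (Suc k) - b) + ?d * ?r1"
    by (subst Ssum_Suc) (simp add: eq_commute[of 0])
  have shift: "(of_nat (Suc k) :: 'a) - (b - 1) = of_nat ?K - b" "(of_nat k :: 'a) - (b - 1) = of_nat (Suc k) - b"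
    by simp_all
  show ?thesis
    unfolding N01_formula_def shift S1 S2 M binom R2_Suc using q2
    by (simp add: field_simps)
qed

lemma N01_formula_0:
  assumes "q > 0"
  shows "N01_formula p q 0 (b::'a::field) = (if b = 0 then 1 else 0)"
  using assms unfolding N01_formula_def by (simp add: R2_0 Ssum_0)

lemma N01_formula_1:
  assumes "q \<ge> 2" "p \<ge> 2"
  shows "N01_formula p q 1 (b::'a::field) = (if b = 0 \<or> b = 1 then 0 else 1)"
proof -
  have "R2 p q 1 = -2" using R2_Suc[of p q 0] R1_1[OF assms(2)] by (simp add: R2_0)
  moreover have "Ssum p q 1 (1 - b) = - (if b = 1 then 1 else 0) - (if b = 0 then 1 else 0)"
    using Ssum_Suc[of p q 0 "1 - b"] R1_1[OF assms(2)] by (auto simp: Ssum_0)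
  moreover have "real ((q - 2) choose 1) = real q - 2" using assms(1) by simp
  ultimately show ?thesis unfolding N01_formula_def using assms(1) by (auto simp: field_simps)
qed

lemma Nsub_minus01_eq_N01_formula:
  fixes b :: "'a::{field,finite}"
  assumes q: "q = CARD('a)" and p: "p = CHAR('a)"
  shows "real (Nsub k b (UNIV - {0, 1})) = N01_formula p q k b"
proof (induction k arbitrary: b rule: induct_nat_012)
  case 0
  then show ?case using q by (simp add: Nsub_zero N01_formula_0)
next
  case 1
  show ?case using q p N01_formula_1[of q p b] CARD_ge_2[where 'a='a] CHAR_ge_2[where 'a='a]
    by (simp add: Nsub_one)
next
  case (ge2 k)
  have U: "insert 1 (insert 0 (UNIV - {0, 1})) = (UNIV :: 'a set)" by auto
  have "Nsub (Suc (Suc k)) b UNIV = Nsub (Suc (Suc k)) b (UNIV - {0, 1}) + Nsub (Suc k) b (UNIV - {0, 1})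
      + Nsub (Suc k) (b - 1) (UNIV - {0, 1}) + Nsub k (b - 1) (UNIV - {0, 1})"
    using Nsub_insert_two[of "UNIV - {0, 1}" 1 0 k b] unfolding U by simp
  then show ?case using N01_formula_rec[OF q p, of k b] ge2 by simp
qed

theorem theorem1p3:
  fixes b :: "'a::{field,finite}" and k p q :: nat
  assumes "q = CARD('a)" and "p = CHAR('a)" and "q > 2"
    and "1 \<le> k" and "k \<le> q - 2"
  shows "real (Nsub k b (UNIV - {0, 1}))
      = (1 / real q) * real ((q - 2) choose k)
        + (1 / real q) * (-1) ^ k * R2 p q k
        - (-1) ^ k * Ssum p q k (of_nat k - b)"
  using Nsub_minus01_eq_N01_formula[OF assms(1,2)] unfolding N01_formula_def .

end
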